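(* Let $\mathbf I_F$ be a weakly faithful generalized Fisher information and $\{\mathcal N^\theta_{A\to B}\}_\theta$ a family of quantum channels. Consider any $n$-round sequential strategy consisting of a $\theta$-independent input state $\rho_{R_1A_1}$ and $\theta$-independent channels $\mathcal S^i_{R_iB_i\to R_{i+1}A_{i+1}}$, $i=1,\dots,n-1$, and let $$\omega^\theta_{R_nB_n}:=(\mathcal N^\theta_{A_n\to B_n}\circ\mathcal S^{n-1}\circ\cdots\circ\mathcal S^1\circ\mathcal N^\theta_{A_1\to B_1})(\rho_{R_1A_1}).$$ Then $\mathbf I_F(\theta;\{\omega^\theta_{R_nB_n}\}_\theta)\le n\cdot\mathbf I^{\mathcal A}_F(\theta;\{\mathcal N^\theta_{A\to B}\}_\theta)$.
   Context: Finite-dimensional systems. A generalized Fisher information $\mathbf I_F$ assigns to each $\theta$ and each family $\{\rho^\theta_A\}_\theta$ of density operators an extended real number such that $\mathbf I_F(\theta;\{\rho^\theta_A\}_\theta)\ge\mathbf I_F(\theta;\{\mathcal N_{A\to B}(\rho^\theta_A)\}_\theta)$ for every $\theta$-independent quantum channel $\mathcal N$; it is weakly faithful if it vanishes on $\theta$-independent families. The amortized Fisher information of a channel family is $\mathbf I^{\mathcal A}_F(\theta;\{\mathcal N^\theta_{A\to B}\}_\theta):=\sup_{\{\rho^\theta_{RA}\}_\theta}[\mathbf I_F(\theta;\{\mathcal N^\theta_{A\to B}(\rho^\theta_{RA})\}_\theta)-\mathbf I_F(\theta;\{\rho^\theta_{RA}\}_\theta)]$, supremum over families of states with arbitrary reference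 system $R$. Channels act on the indicated subsystems and as identity elsewhere. *)

theory Defs
  imports "Jordan_Normal_Form.Matrix" "HOL-Library.Extended_Real"
begin

text \<open>Finite-dimensional quantum systems: operators on C^d are d x d complex matrices
  (type complex mat; the dimension is carried by the matrix).  Composite systems
  R (x) A are ordered with R first, so an operator on C^(dR*dA) is a dR x dR block
  matrix with dA x dA blocks.\<close>

definition mtrace :: "complex mat \<Rightarrow> complex" where
  "mtrace X = (\<Sum>i<dim_row X. X $$ (i, i))"

definition psd :: "nat \<Rightarrow> complex mat \<Rightarrow> bool" where
  "psd d X \<longleftrightarrow> X \<in> carrier_mat d d \<and>
     (\<forall>v \<in> carrier_vec d. Im (conjugate v \<bullet> (X *\<^sub>v v)) = 0 \<and> Re (conjugate v \<bullet> (X *\<^sub>v v)) \<ge> 0)"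

definition density :: "nat \<Rightarrow> complex mat \<Rightarrow> bool" where
  "density d X \<longleftrightarrow> psd d X \<and> mtrace X = 1"

definition blk :: "nat \<Rightarrow> nat \<Rightarrow> nat \<Rightarrow> complex mat \<Rightarrow> complex mat" where
  "blk dA a b X = mat dA dA (\<lambda>(k,l). X $$ (a * dA + k, b * dA + l))"

text \<open>(id_R (x) Phi)(X) for Phi : A \<rightarrow> B, R of dimension dR: Phi applied blockwise.\<close>
definition id_tensor :: "nat \<Rightarrow> nat \<Rightarrow> nat \<Rightarrow> (complex mat \<Rightarrow> complex mat) \<Rightarrow> complex mat \<Rightarrow> complex mat" where
  "id_tensor dR dA dB \<Phi> X =
     mat (dR * dB) (dR * dB) (\<lambda>(i,j). \<Phi> (blk dA (i div dB) (j div dB) X) $$ (i mod dB, j mod dB))"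

definition channel :: "nat \<Rightarrow> nat \<Rightarrow> (complex mat \<Rightarrow> complex mat) \<Rightarrow> bool" where
  "channel dA dB \<Phi> \<longleftrightarrow>
     (\<forall>X \<in> carrier_mat dA dA. \<Phi> X \<in> carrier_mat dB dB) \<and>
     (\<forall>X \<in> carrier_mat dA dA. \<forall>Y \<in> carrier_mat dA dA. \<forall>a b :: complex.
        \<Phi> (a \<cdot>\<^sub>m X + b \<cdot>\<^sub>m Y) = a \<cdot>\<^sub>m \<Phi> X + b \<cdot>\<^sub>m \<Phi> Y) \<and>
     (\<forall>X \<in> carrier_mat dA dA. mtrace (\<Phi> X) = mtrace X) \<and>
     (\<forall>k. \<forall>X. psd (k * dA) X \<longrightarrow> psd (k * dB) (id_tensor k dA dB \<Phi> X))"

definition gen_fisher :: "(real \<Rightarrow> (real \<Rightarrow> complex mat) \<Rightarrow> ereal) \<Rightarrow> bool" where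
  "gen_fisher I \<longleftrightarrow>
     (\<forall>dA dB \<Phi> \<rho> \<theta>. channel dA dB \<Phi> \<longrightarrow> (\<forall>t. density dA (\<rho> t)) \<longrightarrow>
        I \<theta> (\<lambda>t. \<Phi> (\<rho> t)) \<le> I \<theta> \<rho>)"

definition weakly_faithful :: "(real \<Rightarrow> (real \<Rightarrow> complex mat) \<Rightarrow> ereal) \<Rightarrow> bool" where
  "weakly_faithful I \<longleftrightarrow> (\<forall>d \<sigma> \<theta>. density d \<sigma> \<longrightarrow> I \<theta> (\<lambda>t. \<sigma>) = 0)"

definition amortized_fisher ::
  "(real \<Rightarrow> (real \<Rightarrow> complex mat) \<Rightarrow> ereal) \<Rightarrow> nat \<Rightarrow> nat \<Rightarrow> real \<Rightarrow> (real \<Rightarrow> complex mat \<Rightarrow> complex mat) \<Rightarrow> ereal" where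
  "amortized_fisher I dA dB \<theta> N =
     (SUP p \<in> {(dR, \<rho>). \<forall>t. density (dR * dA) (\<rho> t)}.
        I \<theta> (\<lambda>t. id_tensor (fst p) dA dB (N t) (snd p t)) - I \<theta> (snd p))"

text \<open>Output of the n-round sequential strategy: rho on R_1 A_1, channels
  S i : R_i B_i \<rightarrow> R_(i+1) A_(i+1), r i = dimension of R_i.
  seq_out r rho S N t k is the state on R_(k+1) B_(k+1) after k+1 uses of N t.\<close>
fun seq_out :: "(nat \<Rightarrow> nat) \<Rightarrow> nat \<Rightarrow> nat \<Rightarrow> complex mat \<Rightarrow> (nat \<Rightarrow> complex mat \<Rightarrow> complex mat)
    \<Rightarrow> (real \<Rightarrow> complex mat \<Rightarrow> complex mat) \<Rightarrow> real \<Rightarrow> nat \<Rightarrow> complex mat" where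
  "seq_out r dA dB \<rho> S N t 0 = id_tensor (r 1) dA dB (N t) \<rho>"
| "seq_out r dA dB \<rho> S N t (Suc k) =
     id_tensor (r (Suc (Suc k))) dA dB (N t) (S (Suc k) (seq_out r dA dB \<rho> S N t k))"

end

theory Submission
  imports Defs
begin

text \<open>In every round the parameter-dependent channel raises the Fisher information of the
  current state by at most the amortized Fisher information, since the state it acts on is an
  admissible input of the supremum.  The parameter-independent channels between the rounds
  cannot raise it (data processing), and the parameter-independent initial state carries none
  (weak faithfulness).  Telescoping over the \<open>n\<close> rounds gives the bound.\<close>

lemma sum_lessThan_mult_blocks:
  fixes f :: "nat \<Rightarrow> 'a::comm_monoid_add"
  shows "(\<Sum>i<m * n. f i) = (\<Sum>a<m. \<Sum>b<n. f (a * n + b))"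
proof -
  have "(\<Sum>b<n. f (a * n + b)) = sum f {a * n..<a * n + n}" for a
    using sum.shift_bounds_nat_ivl[of f 0 "a * n" n] by (simp add: atLeast0LessThan add.commute)
  then show ?thesis by (simp add: sum.nat_group)
qed

lemma mtrace_id_tensor:
  assumes ch: "channel dA dB \<Phi>" and X: "X \<in> carrier_mat (dR * dA) (dR * dA)"
  shows "mtrace (id_tensor dR dA dB \<Phi> X) = mtrace X"
proof -
  have blk_carrier: "\<Phi> (blk dA a a X) \<in> carrier_mat dB dB" for a
    using ch unfolding channel_def blk_def by auto
  have blk_trace: "mtrace (\<Phi> (blk dA a a X)) = mtrace (blk dA a a X)" for a
    using ch unfolding channel_def blk_def by auto
  have "mtrace (id_tensor dR dA dB \<Phi> X)
      = (\<Sum>i<dR * dB. \<Phi> (blk dA (i div dB) (i div dB) X) $$ (i mod dB, i mod dB))"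
    unfolding mtrace_def id_tensor_def by simp
  also have "\<dots> = (\<Sum>a<dR. \<Sum>b<dB. \<Phi> (blk dA a a X) $$ (b, b))"
    by (subst sum_lessThan_mult_blocks) (auto intro!: sum.cong)
  also have "\<dots> = (\<Sum>a<dR. mtrace (\<Phi> (blk dA a a X)))"
    by (simp add: mtrace_def blk_carrier[THEN carrier_matD(1)])
  also have "\<dots> = (\<Sum>a<dR. mtrace (blk dA a a X))"
    by (simp add: blk_trace)
  also have "\<dots> = (\<Sum>a<dR. \<Sum>b<dA. X $$ (a * dA + b, a * dA + b))"
    by (auto simp: mtrace_def blk_def intro!: sum.cong)
  also have "\<dots> = mtrace X"
    using X by (simp add: mtrace_def sum_lessThan_mult_blocks)
  finally show ?thesis .
qed

lemma density_id_tensor: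
  assumes ch: "channel dA dB \<Phi>" and X: "density (dR * dA) X"
  shows "density (dR * dB) (id_tensor dR dA dB \<Phi> X)"
proof -
  have "psd (dR * dB) (id_tensor dR dA dB \<Phi> X)"
    using ch X unfolding channel_def density_def by blast
  moreover have "X \<in> carrier_mat (dR * dA) (dR * dA)"
    using X unfolding density_def psd_def by auto
  ultimately show ?thesis
    using X mtrace_id_tensor[OF ch] unfolding density_def by auto
qed

lemma id_tensor_one:
  assumes "X \<in> carrier_mat dA dA" and "\<Phi> X \<in> carrier_mat dB dB"
  shows "id_tensor 1 dA dB \<Phi> X = \<Phi> X"
proof -
  have "blk dA 0 0 X = X"
    using assms(1) unfolding blk_def by (auto intro!: eq_matI)
  with assms(2) show ?thesis
    unfolding id_tensor_def by (auto intro!: eq_matI)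
qed

lemma density_channel:
  assumes ch: "channel dA dB \<Phi>" and X: "density dA X"
  shows "density dB (\<Phi> X)"
proof -
  have X_carrier: "X \<in> carrier_mat dA dA"
    using X unfolding density_def psd_def by auto
  then have "\<Phi> X \<in> carrier_mat dB dB"
    using ch unfolding channel_def by auto
  with X_carrier have "id_tensor 1 dA dB \<Phi> X = \<Phi> X"
    by (rule id_tensor_one)
  moreover have "psd (1 * dB) (id_tensor 1 dA dB \<Phi> X)"
    using ch X unfolding channel_def density_def by (metis mult_1)
  moreover have "mtrace (\<Phi> X) = mtrace X"
    using ch X_carrier unfolding channel_def by auto
  ultimately show ?thesis
    using X unfolding density_def by auto
qed

lemma gen_fisher_data_processing:
  assumes "gen_fisher I" and "channel dA dB \<Phi>" and "\<forall>t. density dA (\<rho> t)"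
  shows "I \<theta> (\<lambda>t. \<Phi> (\<rho> t)) \<le> I \<theta> \<rho>"
  using assms unfolding gen_fisher_def by blast

lemma amortized_fisher_upper:
  assumes "\<forall>t. density (dR * dA) (\<sigma> t)"
  shows "I \<theta> (\<lambda>t. id_tensor dR dA dB (N t) (\<sigma> t)) - I \<theta> \<sigma> \<le> amortized_fisher I dA dB \<theta> N"
  unfolding amortized_fisher_def
  by (rule SUP_upper2[where i = "(dR, \<sigma>)"]) (use assms in auto)

lemma ereal_le_Suc_mult_of_diff_le:
  fixes x y A :: ereal
  assumes "x - y \<le> A" and "y \<le> ereal (real k) * A"
  shows "x \<le> ereal (real (Suc k)) * A"
  using assms by (cases x; cases y; cases A) (auto simp: algebra_simps split: if_splits)

fun seq_in :: "(nat \<Rightarrow> nat) \<Rightarrow> nat \<Rightarrow> nat \<Rightarrow> complex mat \<Rightarrow> (nat \<Rightarrow> complex mat \<Rightarrow> complex mat)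
    \<Rightarrow> (real \<Rightarrow> complex mat \<Rightarrow> complex mat) \<Rightarrow> real \<Rightarrow> nat \<Rightarrow> complex mat" where
  "seq_in r dA dB \<rho> S N t 0 = \<rho>"
| "seq_in r dA dB \<rho> S N t (Suc k) = S (Suc k) (seq_out r dA dB \<rho> S N t k)"

lemma seq_out_eq_id_tensor_seq_in:
  "seq_out r dA dB \<rho> S N t k = id_tensor (r (Suc k)) dA dB (N t) (seq_in r dA dB \<rho> S N t k)"
  by (cases k) simp_all

lemma density_seq_in:
  assumes chN: "\<forall>t. channel dA dB (N t)" and \<rho>: "density (r 1 * dA) \<rho>"
    and chS: "\<And>i. 1 \<le> i \<Longrightarrow> i \<le> k \<Longrightarrow> channel (r i * dB) (r (Suc i) * dA) (S i)"
  shows "density (r (Suc k) * dA) (seq_in r dA dB \<rho> S N t k)"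
  using chS
proof (induction k)
  case 0
  then show ?case using \<rho> by simp
next
  case (Suc k)
  then have "density (r (Suc k) * dB) (seq_out r dA dB \<rho> S N t k)"
    using chN density_id_tensor by (simp add: seq_out_eq_id_tensor_seq_in)
  moreover have "channel (r (Suc k) * dB) (r (Suc (Suc k)) * dA) (S (Suc k))"
    using Suc.prems by simp
  ultimately show ?case
    by (simp add: density_channel)
qed

lemma fisher_seq_out_le:
  assumes I: "gen_fisher I" "weakly_faithful I"
    and chN: "\<forall>t. channel dA dB (N t)" and \<rho>: "density (r 1 * dA) \<rho>"
    and chS: "\<And>i. 1 \<le> i \<Longrightarrow> i \<le> k \<Longrightarrow> channel (r i * dB) (r (Suc i) * dA) (S i)"
  shows "I \<theta> (\<lambda>t. seq_out r dA dB \<rho> S N t k) \<le> ereal (real (Suc k)) * amortized_fisher I dA dB \<theta> N"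
  using chS
proof (induction k)
  let ?A = "amortized_fisher I dA dB \<theta> N"
  have round: "I \<theta> (\<lambda>t. seq_out r dA dB \<rho> S N t j) \<le> ereal (real (Suc j)) * ?A"
    if "I \<theta> (\<lambda>t. seq_in r dA dB \<rho> S N t j) \<le> ereal (real j) * ?A"
      and "\<And>i. 1 \<le> i \<Longrightarrow> i \<le> j \<Longrightarrow> channel (r i * dB) (r (Suc i) * dA) (S i)" for j
  proof -
    have "\<forall>t. density (r (Suc j) * dA) (seq_in r dA dB \<rho> S N t j)"
      using density_seq_in[where r = r, OF chN \<rho>] that(2) by blast
    then have "I \<theta> (\<lambda>t. seq_out r dA dB \<rho> S N t j) - I \<theta> (\<lambda>t. seq_in r dA dB \<rho> S N t j) \<le> ?A"
      unfolding seq_out_eq_id_tensor_seq_in by (rule amortized_fisher_upper)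
    then show ?thesis
      using that(1) by (rule ereal_le_Suc_mult_of_diff_le)
  qed
  {
    case 0
    have "I \<theta> (\<lambda>t. seq_in r dA dB \<rho> S N t 0) = 0"
      using I(2) \<rho> unfolding weakly_faithful_def by simp
    then show ?case by (intro round) (simp_all add: zero_ereal_def[symmetric])
  next
    case (Suc k)
    have "I \<theta> (\<lambda>t. seq_in r dA dB \<rho> S N t (Suc k)) \<le> I \<theta> (\<lambda>t. seq_out r dA dB \<rho> S N t k)"
      using gen_fisher_data_processing[OF I(1) Suc.prems[of "Suc k"]]
        density_id_tensor[OF spec[OF chN] density_seq_in[where r = r, OF chN \<rho>]] Suc.prems
      by (simp add: seq_out_eq_id_tensor_seq_in)
    also have "\<dots> \<le> ereal (real (Suc k)) * ?A"
      using Suc by simp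
    finally show ?case
      using Suc.prems by (intro round) simp_all
  }
qed

theorem mainTheorem5:
  fixes I :: "real \<Rightarrow> (real \<Rightarrow> complex mat) \<Rightarrow> ereal"
    and dA dB n :: nat and r :: "nat \<Rightarrow> nat"
    and \<rho> :: "complex mat" and S :: "nat \<Rightarrow> complex mat \<Rightarrow> complex mat"
    and N :: "real \<Rightarrow> complex mat \<Rightarrow> complex mat" and \<theta> :: real
  assumes "gen_fisher I" and "weakly_faithful I"
    and "\<forall>t. channel dA dB (N t)"
    and "n \<ge> 1"
    and "density (r 1 * dA) \<rho>"
    and "\<forall>i. 1 \<le> i \<and> i \<le> n - 1 \<longrightarrow> channel (r i * dB) (r (Suc i) * dA) (S i)"
  shows "I \<theta> (\<lambda>t. seq_out r dA dB \<rho> S N t (n - 1)) \<le> ereal (real n) * amortized_fisher I dA dB \<theta> N"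
proof -
  have "I \<theta> (\<lambda>t. seq_out r dA dB \<rho> S N t (n - 1))
      \<le> ereal (real (Suc (n - 1))) * amortized_fisher I dA dB \<theta> N"
    using assms(6) by (intro fisher_seq_out_le[where r = r and dA = dA, OF assms(1,2,3,5)]) simp
  then show ?thesis
    using assms(4) by simp
qed

end
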